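(* Consider the Bayesian forecast reconciliation model: a latent vector $\pmb{x}\in\mathbb{R}^N$ with prior density $p(\pmb{x})$ given by the forecast distribution $\Theta$, a nuisance latent variable $u\mid\pmb{x}\sim\delta(f(\pmb{x}))$ for $f:\mathbb{R}^N\to\mathbb{R}^M$, $M\le N$, and an observation $y$ giving soft evidence $u\mid y\sim\mathrm{H}$, so that $$p(\pmb{x}\mid y)=p(\pmb{x})\,\frac{p(u=f(\pmb{x})\mid y)}{p(u=f(\pmb{x}))},\qquad p(u)=\int\delta(u-f(\pmb{x}))p(\pmb{x})\,d\pmb{x}.$$ Let $f(\pmb{x})=A\pmb{x}$ for an $M\times N$ matrix $A$, and let the forecast distributions $\Theta$ and $\mathrm{H}$ be Gaussian with parameters $(\pmb{\mu}_\theta,\Sigma_\theta)$ and $(\pmb{\mu}_\eta,\Sigma_\eta)$ respectively, i.e. $p(\pmb{x})=p_{\mathcal{N}}(\pmb{x}\mid\pmb{\mu}_\theta,\Sigma_\theta)$ and $p(f(\pmb{x})\mid y)=p_{\mathcal{N}}(f(\pmb{x})\mid\pmb{\mu}_\eta,\Sigma_\eta)$. Then $$p(\pmb{x}\mid y)\propto p_{\mathcal{N}}(\pmb{x}\mid\pmb{\mu}_{LG},\Sigma_{LG}),$$ where $$\Sigma_{LG}=\left(\Sigma_\theta^{-1}+A^T\left[\Sigma_\eta^{-1}-(A\Sigma_\theta A^T)^{-1}\right]A\right)^{-1},\qquad \pmb{\mu}_{LG}=\pmb{\mu}_\theta+\Sigma_{LG}A^T\Sigma_\eta^{-1}(\p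mb{\mu}_\eta-A\pmb{\mu}_\theta).$$
   Context: Forecast reconciliation setting: $N$ subsystems with parameters of interest $x_i\in\mathbb{R}$ forming $\pmb{x}\in\mathbb{R}^N$; forecasts are given for $\pmb{x}$ (prior distribution $\Theta$, constructed from the per-component forecasts) and for the summary statistic $u=f(\pmb{x})$ (distribution $\mathrm{H}$). In the Bayesian network, $\pmb{x}\to u$ with Dirac delta conditional $p(u\mid\pmb{x})=\delta(u-f(\pmb{x}))$, and $y$ provides soft evidence about $u$, meaning the posterior $u\mid y\sim\mathrm{H}$ is specified. $p_{\mathcal{N}}(\cdot\mid\pmb{\mu},\Sigma)$ denotes the multivariate Gaussian density with mean $\pmb{\mu}$ and covariance $\Sigma$. *)

theory Defs
  imports "HOL-Probability.Probability"
begin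

definition pos_def_mat :: "real ^ 'n ^ 'n \<Rightarrow> bool" where
  "pos_def_mat S \<longleftrightarrow> transpose S = S \<and> (\<forall>x. x \<noteq> 0 \<longrightarrow> x \<bullet> (S *v x) > 0)"

definition gauss_pdf :: "real ^ 'n \<Rightarrow> real ^ 'n ^ 'n \<Rightarrow> real ^ 'n \<Rightarrow> real" where
  "gauss_pdf mu S x =
     exp (- (1/2) * ((x - mu) \<bullet> (matrix_inv S *v (x - mu))))
     / sqrt ((2 * pi) ^ CARD('n) * det S)"

end

theory Submission
  imports Defs
begin

(* Completing the square in x shows that p(x) p_N(A x | mu_e, S_e) is proportional to
   p_N(x | mu_LG, S_LG) times the Gaussian kernel of A x with mean A mu_t and covariance
   B = A S_t A^T.  It therefore suffices that the marginal density p(u) of u = A x is almost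
   everywhere proportional to that kernel.  Instead of computing the image measure, note that
   translating x by S_t A^T B^-1 a translates A x by a and multiplies the prior density by a
   factor depending only on A x, namely the factor by which the kernel of B changes under
   translation by a.  Hence p(u) divided by the kernel is almost everywhere translation
   invariant, and so almost everywhere constant by Fubini.  Positive definiteness of S_LG^-1
   comes from the inequality (A x)^T B^-1 (A x) <= x^T S_t^-1 x. *)

section \<open>Inverse and positive definite matrices\<close>

lemma matrix_inv_right:
  fixes S :: "'a::semiring_1 ^ 'n ^ 'n"
  assumes "invertible S"
  shows "S ** matrix_inv S = mat 1"
  using someI_ex[OF assms[unfolded invertible_def]] unfolding matrix_inv_def by blast

lemma matrix_inv_left:
  fixes S :: "'a::semiring_1 ^ 'n ^ 'n"
  assumes "invertible S"
  shows "matrix_inv S ** S = mat 1"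
  using someI_ex[OF assms[unfolded invertible_def]] unfolding matrix_inv_def by blast

lemma invertible_matrix_inv:
  fixes S :: "'a::semiring_1 ^ 'n ^ 'n"
  assumes "invertible S"
  shows "invertible (matrix_inv S)"
  using matrix_inv_left[OF assms] matrix_inv_right[OF assms] unfolding invertible_def by blast

lemma matrix_inv_matrix_inv:
  fixes S :: "'a::comm_semiring_1 ^ 'n ^ 'n"
  assumes "invertible S"
  shows "matrix_inv (matrix_inv S) = S"
proof -
  have "matrix_inv (matrix_inv S) = matrix_inv (matrix_inv S) ** (matrix_inv S ** S)"
    by (simp add: matrix_inv_left[OF assms])
  also have "\<dots> = S"
    by (simp add: matrix_mul_assoc matrix_inv_left[OF invertible_matrix_inv[OF assms]])
  finally show ?thesis .
qed

lemma matrix_inv_cancel_left: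
  fixes S :: "'a::comm_semiring_1 ^ 'n ^ 'n"
  assumes "invertible S"
  shows "matrix_inv S *v (S *v x) = x"
  by (simp add: matrix_vector_mul_assoc matrix_inv_left[OF assms])

lemma matrix_inv_cancel_right:
  fixes S :: "'a::comm_semiring_1 ^ 'n ^ 'n"
  assumes "invertible S"
  shows "S *v (matrix_inv S *v x) = x"
  by (simp add: matrix_vector_mul_assoc matrix_inv_right[OF assms])

lemma matrix_inv_transpose:
  fixes S :: "'a::comm_semiring_1 ^ 'n ^ 'n"
  assumes "invertible S"
  shows "matrix_inv (transpose S) = transpose (matrix_inv S)"
proof -
  have left: "transpose (matrix_inv S) ** transpose S = mat 1"
    and right: "transpose S ** transpose (matrix_inv S) = mat 1"
    by (metis matrix_inv_right[OF assms] matrix_inv_left[OF assms] matrix_transpose_mul transpose_mat)+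
  then have "invertible (transpose S)"
    unfolding invertible_def by blast
  then have "matrix_inv (transpose S) = matrix_inv (transpose S) ** (transpose S ** transpose (matrix_inv S))"
    by (simp add: right)
  also have "\<dots> = transpose (matrix_inv S)"
    by (simp add: matrix_mul_assoc matrix_inv_left[OF \<open>invertible (transpose S)\<close>])
  finally show ?thesis .
qed

lemma transpose_add: "transpose (A + B) = transpose A + transpose (B :: 'a::semiring_1 ^ 'n ^ 'm)"
  by (simp add: transpose_def vec_eq_iff)

lemma transpose_diff: "transpose (A - B) = transpose A - transpose (B :: 'a::ring_1 ^ 'n ^ 'm)"
  by (simp add: transpose_def vec_eq_iff)

lemma inner_transpose_matrix_vector:
  fixes A :: "real ^ 'n ^ 'm"
  shows "x \<bullet> (transpose A *v y) = (A *v x) \<bullet> y"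
  by (metis dot_lmul_matrix inner_commute transpose_matrix_vector)

lemma inner_vector_matrix:
  fixes A :: "real ^ 'n ^ 'm"
  shows "x \<bullet> (y v* A) = (A *v x) \<bullet> y"
  by (metis dot_lmul_matrix inner_commute)

lemma inner_symmetric_matrix:
  fixes S :: "real ^ 'n ^ 'n"
  assumes "transpose S = S"
  shows "x \<bullet> (S *v y) = y \<bullet> (S *v x)"
  by (metis assms inner_transpose_matrix_vector inner_commute)

lemma quadratic_form_diff:
  fixes K :: "real ^ 'n ^ 'n"
  assumes "transpose K = K"
  shows "(y - w) \<bullet> (K *v (y - w)) = y \<bullet> (K *v y) - 2 * (w \<bullet> (K *v y)) + w \<bullet> (K *v w)"
  using inner_symmetric_matrix[OF assms, of y w]
  by (simp add: matrix_vector_mult_diff_distrib inner_diff_left inner_diff_right)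

lemma pos_def_mat_symmetric: "pos_def_mat S \<Longrightarrow> transpose S = S"
  unfolding pos_def_mat_def by blast

lemma pos_def_mat_pos: "pos_def_mat S \<Longrightarrow> x \<noteq> 0 \<Longrightarrow> x \<bullet> (S *v x) > 0"
  unfolding pos_def_mat_def by blast

lemma pos_def_mat_nonneg: "pos_def_mat S \<Longrightarrow> x \<bullet> (S *v x) \<ge> 0"
  by (cases "x = 0") (auto dest: pos_def_mat_pos[of S x])

lemma pos_def_mat_inj:
  fixes S :: "real ^ 'n ^ 'n"
  assumes "pos_def_mat S"
  shows "inj ((*v) S)"
proof (rule injI)
  fix x y
  assume "S *v x = S *v y"
  then have "(x - y) \<bullet> (S *v (x - y)) = 0"
    by (simp add: matrix_vector_mult_diff_distrib)
  then show "x = y"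
    using pos_def_mat_pos[OF assms, of "x - y"] by auto
qed

lemma pos_def_mat_invertible:
  fixes S :: "real ^ 'n ^ 'n"
  shows "pos_def_mat S \<Longrightarrow> invertible S"
  using pos_def_mat_inj matrix_left_invertible_injective invertible_left_inverse by blast

lemma pos_def_mat_matrix_inv:
  fixes S :: "real ^ 'n ^ 'n"
  assumes S: "pos_def_mat S"
  shows "pos_def_mat (matrix_inv S)"
  unfolding pos_def_mat_def
proof safe
  have "invertible S"
    by (rule pos_def_mat_invertible[OF S])
  then show "transpose (matrix_inv S) = matrix_inv S"
    by (metis matrix_inv_transpose pos_def_mat_symmetric[OF S])
next
  fix x :: "real ^ 'n"
  assume "x \<noteq> 0"
  define y where "y = matrix_inv S *v x"
  have x: "x = S *v y"
    unfolding y_def by (simp add: matrix_inv_cancel_right pos_def_mat_invertible[OF S])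
  with \<open>x \<noteq> 0\<close> have "y \<noteq> 0"
    by auto
  moreover have "x \<bullet> (matrix_inv S *v x) = y \<bullet> (S *v y)"
    by (simp add: y_def[symmetric] x inner_commute matrix_inv_cancel_left pos_def_mat_invertible[OF S])
  ultimately show "x \<bullet> (matrix_inv S *v x) > 0"
    using pos_def_mat_pos[OF S] by simp
qed

(* det vanishes nowhere on the segment of positive definite matrices from mat 1 to S, so by
   continuity it keeps the sign of det (mat 1) = 1. *)
lemma pos_def_mat_det_pos:
  fixes S :: "real ^ 'n ^ 'n"
  assumes S: "pos_def_mat S"
  shows "det S > 0"
proof (rule ccontr)
  assume "\<not> det S > 0"
  define M where "M t = (1 - t) *\<^sub>R (mat 1 :: real ^ 'n ^ 'n) + t *\<^sub>R S" for t :: real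
  have "continuous_on {0..1} (\<lambda>t. det (M t))"
    unfolding M_def det_def by (intro continuous_intros)
  moreover have "det (M 0) = 1" "det (M 1) \<le> 0"
    using \<open>\<not> det S > 0\<close> by (simp_all add: M_def)
  ultimately obtain t where t: "t \<in> {0..1}" "det (M t) = 0"
    using IVT2'[of "\<lambda>t. det (M t)" 1 0 0] by auto
  have "pos_def_mat (M t)"
    unfolding pos_def_mat_def
  proof safe
    show "transpose (M t) = M t"
      using pos_def_mat_symmetric[OF S] by (simp add: M_def transpose_def vec_eq_iff mat_def)
  next
    fix x :: "real ^ 'n"
    assume "x \<noteq> 0"
    have "x \<bullet> (M t *v x) = (1 - t) * (x \<bullet> x) + t * (x \<bullet> (S *v x))"
      by (simp add: M_def scaleR_matrix_vector_assoc[symmetric] matrix_vector_mult_add_rdistrib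
          inner_add_right)
    moreover have "x \<bullet> x > 0" "x \<bullet> (S *v x) > 0"
      using \<open>x \<noteq> 0\<close> pos_def_mat_pos[OF S] by auto
    ultimately show "x \<bullet> (M t *v x) > 0"
      using t(1) by (smt (verit) atLeastAtMost_iff mult_nonneg_nonneg mult_pos_pos)
  qed
  then have "det (M t) \<noteq> 0"
    using pos_def_mat_invertible invertible_det_nz by blast
  with t show False
    by simp
qed

lemma pos_def_mat_congruence:
  fixes A :: "real ^ 'n ^ 'm" and S :: "real ^ 'n ^ 'n"
  assumes S: "pos_def_mat S" and inj: "inj ((*v) (transpose A))"
  shows "pos_def_mat (A ** S ** transpose A)"
  unfolding pos_def_mat_def
proof safe
  show "transpose (A ** S ** transpose A) = A ** S ** transpose A"
    using pos_def_mat_symmetric[OF S] by (simp add: matrix_transpose_mul matrix_mul_assoc)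
next
  fix x :: "real ^ 'm"
  assume "x \<noteq> 0"
  then have "transpose A *v x \<noteq> 0"
    using inj by (metis injD matrix_vector_mult_0_right)
  moreover have "x \<bullet> ((A ** S ** transpose A) *v x) = (transpose A *v x) \<bullet> (S *v (transpose A *v x))"
    by (simp add: matrix_vector_mul_assoc[symmetric] inner_transpose_matrix_vector[symmetric]
        del: transpose_matrix_vector)
  ultimately show "x \<bullet> ((A ** S ** transpose A) *v x) > 0"
    using pos_def_mat_pos[OF S] by simp
qed

lemma quadratic_form_complete_square:
  fixes P :: "real ^ 'n ^ 'n"
  assumes "transpose P = P" "invertible P"
  shows "(y - matrix_inv P *v b) \<bullet> (P *v (y - matrix_inv P *v b))
         = y \<bullet> (P *v y) - 2 * (b \<bullet> y) + b \<bullet> (matrix_inv P *v b)"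
  using quadratic_form_diff[OF assms(1), of y "matrix_inv P *v b"]
    inner_symmetric_matrix[OF assms(1), of "matrix_inv P *v b" y]
  by (simp add: matrix_inv_cancel_right[OF assms(2)] inner_commute)

(* The paper's Sigma_LG^-1, for covariance S of x and forecast covariance E of A x. *)
definition lg_precision :: "real ^ 'n ^ 'n \<Rightarrow> real ^ 'm ^ 'm \<Rightarrow> real ^ 'n ^ 'm \<Rightarrow> real ^ 'n ^ 'n"
  where "lg_precision S E A =
    matrix_inv S + transpose A ** (matrix_inv E - matrix_inv (A ** S ** transpose A)) ** A"

lemma lg_precision_quadratic_form:
  "x \<bullet> (lg_precision S E A *v x) = x \<bullet> (matrix_inv S *v x) + (A *v x) \<bullet> (matrix_inv E *v (A *v x))
     - (A *v x) \<bullet> (matrix_inv (A ** S ** transpose A) *v (A *v x))"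
  by (simp add: lg_precision_def matrix_vector_mult_add_rdistrib matrix_vector_mult_diff_rdistrib
      matrix_vector_mul_assoc[symmetric] inner_add_right inner_diff_right inner_vector_matrix)

(* With B = A S A^T, the vector w = S A^T B^-1 A x satisfies A w = A x; the inequality is the
   nonnegativity of the S^-1-form at x - w. *)
lemma quadratic_form_matrix_inv_congruence_le:
  fixes A :: "real ^ 'n ^ 'm" and S :: "real ^ 'n ^ 'n"
  assumes S: "pos_def_mat S" and inj: "inj ((*v) (transpose A))"
  shows "(A *v x) \<bullet> (matrix_inv (A ** S ** transpose A) *v (A *v x)) \<le> x \<bullet> (matrix_inv S *v x)"
proof -
  define B where "B = A ** S ** transpose A"
  define z where "z = matrix_inv B *v (A *v x)"
  define w where "w = S *v (transpose A *v z)"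
  have invS: "invertible S"
    by (rule pos_def_mat_invertible[OF S])
  have invB: "invertible B"
    unfolding B_def by (rule pos_def_mat_invertible[OF pos_def_mat_congruence[OF S inj]])
  have Siw: "matrix_inv S *v w = transpose A *v z"
    by (simp add: w_def matrix_inv_cancel_left[OF invS] del: transpose_matrix_vector)
  have "A *v w = B *v z"
    by (simp add: w_def B_def matrix_vector_mul_assoc matrix_mul_assoc del: transpose_matrix_vector)
  then have Aw: "A *v w = A *v x"
    by (simp add: z_def matrix_inv_cancel_right[OF invB])
  have wx: "w \<bullet> (matrix_inv S *v x) = (A *v x) \<bullet> z"
    by (metis Aw Siw inner_transpose_matrix_vector inner_symmetric_matrix
        pos_def_mat_symmetric[OF pos_def_mat_matrix_inv[OF S]])
  have "0 \<le> (x - w) \<bullet> (matrix_inv S *v (x - w))"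
    by (rule pos_def_mat_nonneg[OF pos_def_mat_matrix_inv[OF S]])
  also have "\<dots> = x \<bullet> (matrix_inv S *v x) - (A *v x) \<bullet> z"
    using quadratic_form_diff[OF pos_def_mat_symmetric[OF pos_def_mat_matrix_inv[OF S]], of x w]
    by (simp add: wx Siw Aw inner_transpose_matrix_vector del: transpose_matrix_vector)
  finally show ?thesis
    by (simp add: z_def B_def)
qed

lemma pos_def_mat_lg_precision:
  fixes A :: "real ^ 'n ^ 'm" and S :: "real ^ 'n ^ 'n" and E :: "real ^ 'm ^ 'm"
  assumes S: "pos_def_mat S" and E: "pos_def_mat E" and inj: "inj ((*v) (transpose A))"
  shows "pos_def_mat (lg_precision S E A)"
  unfolding pos_def_mat_def
proof safe
  have "transpose (matrix_inv M) = matrix_inv M" if "pos_def_mat M" for M :: "real ^ 'k ^ 'k"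
    by (rule pos_def_mat_symmetric[OF pos_def_mat_matrix_inv[OF that]])
  note symmetric = this[OF S] this[OF E] this[OF pos_def_mat_congruence[OF S inj]]
  show "transpose (lg_precision S E A) = lg_precision S E A"
    by (simp add: lg_precision_def transpose_add transpose_diff matrix_transpose_mul symmetric
        matrix_mul_assoc)
next
  fix x :: "real ^ 'n"
  assume "x \<noteq> 0"
  show "x \<bullet> (lg_precision S E A *v x) > 0"
  proof (cases "A *v x = 0")
    case True
    then show ?thesis
      using pos_def_mat_pos[OF pos_def_mat_matrix_inv[OF S] \<open>x \<noteq> 0\<close>]
      by (simp add: lg_precision_quadratic_form)
  next
    case False
    then show ?thesis
      using pos_def_mat_pos[OF pos_def_mat_matrix_inv[OF E] False]
        quadratic_form_matrix_inv_congruence_le[OF S inj, of x]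
      by (simp add: lg_precision_quadratic_form)
  qed
qed

lemma lg_precision_complete_square:
  fixes A :: "real ^ 'n ^ 'm" and S :: "real ^ 'n ^ 'n" and E :: "real ^ 'm ^ 'm"
    and mu :: "real ^ 'n" and mue :: "real ^ 'm"
  assumes S: "pos_def_mat S" and E: "pos_def_mat E" and inj: "inj ((*v) (transpose A))"
  defines "P \<equiv> lg_precision S E A"
    and "b \<equiv> transpose A *v (matrix_inv E *v (mue - A *v mu))"
  shows "(x - mu) \<bullet> (matrix_inv S *v (x - mu)) + (A *v x - mue) \<bullet> (matrix_inv E *v (A *v x - mue))
       - (A *v x - A *v mu) \<bullet> (matrix_inv (A ** S ** transpose A) *v (A *v x - A *v mu))
     = (x - (mu + matrix_inv P *v b)) \<bullet> (P *v (x - (mu + matrix_inv P *v b)))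
       + ((mue - A *v mu) \<bullet> (matrix_inv E *v (mue - A *v mu)) - b \<bullet> (matrix_inv P *v b))"
proof -
  define y where "y = x - mu"
  define d where "d = mue - A *v mu"
  have P: "pos_def_mat P"
    unfolding P_def by (rule pos_def_mat_lg_precision[OF S E inj])
  have symE: "transpose (matrix_inv E) = matrix_inv E"
    by (rule pos_def_mat_symmetric[OF pos_def_mat_matrix_inv[OF E]])
  have "d \<bullet> (matrix_inv E *v (A *v y)) = b \<bullet> y"
    by (simp add: b_def d_def[symmetric] inner_symmetric_matrix[OF symE, of d] inner_transpose_matrix_vector
        inner_commute del: transpose_matrix_vector)
  then have cross: "(A *v y - d) \<bullet> (matrix_inv E *v (A *v y - d))
      = (A *v y) \<bullet> (matrix_inv E *v (A *v y)) - 2 * (b \<bullet> y) + d \<bullet> (matrix_inv E *v d)"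
    by (simp add: quadratic_form_diff[OF symE])
  have shift: "A *v x - mue = A *v y - d" "A *v x - A *v mu = A *v y"
    "x - (mu + matrix_inv P *v b) = y - matrix_inv P *v b"
    by (simp_all add: y_def d_def matrix_vector_mult_diff_distrib)
  show ?thesis
    unfolding shift y_def[symmetric] d_def[symmetric] P_def[symmetric]
    using cross lg_precision_quadratic_form[of y S E A, folded P_def]
      quadratic_form_complete_square[OF pos_def_mat_symmetric[OF P] pos_def_mat_invertible[OF P], of y b]
    by simp
qed

section \<open>Translations of Lebesgue measure\<close>

lemma AE_lborel_imp_ex:
  assumes "AE x in (lborel :: 'a::euclidean_space measure). P x"
  shows "\<exists>x. P x"
  using eventually_happens[OF assms] ae_filter_eq_bot_iff[of lborel] by auto

lemma distr_lborel_translate: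
  fixes c :: "'a::euclidean_space"
  shows "distr lborel lborel ((+) c) = lborel"
  by (subst lborel_distr_plus[symmetric, of c]) (rule distr_cong; simp)

lemma distr_lborel_reflect:
  fixes c :: "'a::euclidean_space"
  shows "distr lborel lborel (\<lambda>x. c - x) = lborel"
proof -
  have "lborel = distr lborel borel (\<lambda>x. c + (-1) *\<^sub>R x)"
    using lborel_affine[of "-1" c] by (simp add: density_1)
  also have "\<dots> = distr lborel lborel (\<lambda>x. c - x)"
    by (rule distr_cong) auto
  finally show ?thesis ..
qed

lemma distr_density_lborel_translate:
  fixes v :: "'a::euclidean_space"
  assumes [measurable]: "G \<in> borel_measurable borel"
  shows "distr (density lborel G) lborel ((+) v) = density lborel (\<lambda>x. G (x - v))"
  using distr_density_distr[of "(+) (- v)" lborel lborel "(+) v" G]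
  by (simp add: distr_lborel_translate comp_def)

(* By Fubini, H (u - a) = H u for almost all pairs (u, a); fix a good u0 and substitute
   w = u0 - a. *)
lemma AE_translation_invariant_imp_AE_const:
  fixes H :: "'a::euclidean_space \<Rightarrow> ennreal"
  assumes [measurable]: "H \<in> borel_measurable borel"
    and invariant: "\<And>a. AE u in lborel. H (u - a) = H u"
  shows "\<exists>C. AE u in lborel. H u = C"
proof -
  have "AE u in lborel. AE a in lborel. H (u - a) = H u"
    by (subst lborel_pair.AE_commute) (measurable, use invariant in simp)
  then obtain u0 where "AE a in lborel. H (u0 - a) = H u0"
    using AE_lborel_imp_ex by blast
  then have "AE w in distr lborel lborel (\<lambda>a. u0 - a). H w = H u0"
    by (subst AE_distr_iff) auto
  then show ?thesis
    unfolding distr_lborel_reflect by blast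
qed

lemma distr_density_translate_equivariant:
  fixes T :: "'a::euclidean_space \<Rightarrow> 'b::euclidean_space"
    and g :: "'a \<Rightarrow> ennreal" and f \<phi> :: "'b \<Rightarrow> ennreal"
  assumes [measurable]: "g \<in> borel_measurable borel" "f \<in> borel_measurable borel"
      "\<phi> \<in> borel_measurable borel" "T \<in> borel_measurable borel"
    and image: "distr (density lborel g) lborel T = density lborel f"
    and T_translate: "\<And>x. T (v + x) = a + T x"
    and g_translate: "\<And>x. g (x - v) = g x * \<phi> (T x)"
  shows "AE u in lborel. f (u - a) = f u * \<phi> u"
proof -
  let ?M = "density lborel g"
  have "density lborel (\<lambda>u. f (u - a)) = distr (distr ?M lborel T) lborel ((+) a)"
    unfolding image by (rule distr_density_lborel_translate[symmetric]) measurable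
  also have "\<dots> = distr ?M lborel ((+) a \<circ> T)"
    by (rule distr_distr) auto
  also have "(+) a \<circ> T = T \<circ> (+) v"
    by (auto simp: T_translate)
  also have "distr ?M lborel (T \<circ> (+) v) = distr (distr ?M lborel ((+) v)) lborel T"
    by (rule distr_distr[symmetric]) auto
  also have "distr ?M lborel ((+) v) = density ?M (\<lambda>x. \<phi> (T x))"
    by (simp add: distr_density_lborel_translate g_translate density_density_eq)
  also have "distr (density ?M (\<lambda>x. \<phi> (T x))) lborel T = density (distr ?M lborel T) \<phi>"
    by (rule density_distr[symmetric]) auto
  also have "\<dots> = density lborel (\<lambda>u. f u * \<phi> u)"
    unfolding image by (rule density_density_eq) auto
  finally show ?thesis
    by (intro sigma_finite_measure.density_unique[OF sigma_finite_lborel]) auto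
qed

lemma AE_distr_density_pullback:
  fixes T :: "'a::euclidean_space \<Rightarrow> 'b::euclidean_space" and g :: "'a \<Rightarrow> ennreal"
  assumes [measurable]: "g \<in> borel_measurable borel" "T \<in> borel_measurable borel"
    and g_pos: "\<And>x. g x > 0"
    and image: "distr (density lborel g) lborel T = density lborel f"
    and "AE u in density lborel f. P u"
  shows "AE x in lborel. P (T x)"
proof -
  have "AE u in distr (density lborel g) lborel T. P u"
    unfolding image by fact
  then have "AE x in density lborel g. P (T x)"
    by (rule AE_distrD[rotated]) simp
  then show ?thesis
    using g_pos by (simp add: AE_density)
qed

lemma AE_translate_equivariant_imp_proportional:
  fixes F :: "'a::euclidean_space \<Rightarrow> ennreal" and k :: "'a \<Rightarrow> real"
  assumes [measurable]: "F \<in> borel_measurable borel" "k \<in> borel_measurable borel"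
    and k_pos: "\<And>u. k u > 0" and F_finite: "\<And>u. F u \<noteq> \<top>"
    and equivariant: "\<And>a. AE u in lborel. F (u - a) = F u * ennreal (k (u - a) / k u)"
  shows "\<exists>c\<ge>0. AE u in lborel. F u = ennreal (c * k u)"
proof -
  define H where "H u = F u * ennreal (1 / k u)" for u
  have "AE u in lborel. H (u - a) = H u" for a
    using equivariant[of a]
  proof eventually_elim
    case (elim u)
    have "ennreal (k (u - a) / k u) * ennreal (1 / k (u - a)) = ennreal (1 / k u)"
      using k_pos[of u] k_pos[of "u - a"] by (simp add: ennreal_mult[symmetric] less_imp_le)
    then show ?case
      by (simp add: H_def elim mult.assoc)
  qed
  moreover have "H \<in> borel_measurable borel"
    unfolding H_def[abs_def] by measurable
  ultimately obtain C where C: "AE u in lborel. H u = C"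
    using AE_translation_invariant_imp_AE_const by blast
  then obtain u0 where "H u0 = C"
    using AE_lborel_imp_ex by blast
  then have "C \<noteq> \<top>"
    using F_finite[of u0] by (auto simp: H_def ennreal_mult_eq_top_iff)
  then obtain c where c: "C = ennreal c" "c \<ge> 0"
    by (cases C) auto
  have "F u = H u * ennreal (k u)" for u
    using k_pos[of u] by (simp add: H_def mult.assoc ennreal_mult[symmetric] less_imp_le)
  with C c show ?thesis
    by (auto simp: ennreal_mult k_pos less_imp_le elim!: eventually_mono)
qed

section \<open>Gaussian densities\<close>

(* Parametrised by the precision matrix, not the covariance as in gauss_pdf. *)
definition gauss_kernel :: "real ^ 'n \<Rightarrow> real ^ 'n ^ 'n \<Rightarrow> real ^ 'n \<Rightarrow> real"
  where "gauss_kernel mu K x = exp (- (1/2) * ((x - mu) \<bullet> (K *v (x - mu))))"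

lemma gauss_kernel_pos: "gauss_kernel mu K x > 0"
  by (simp add: gauss_kernel_def)

lemma gauss_kernel_nonzero [simp]: "gauss_kernel mu K x \<noteq> 0"
  by (simp add: gauss_kernel_def)

lemma gauss_pdf_eq_kernel:
  "gauss_pdf mu S x = gauss_kernel mu (matrix_inv S) x / sqrt ((2 * pi) ^ CARD('n) * det S)"
  for S :: "real ^ 'n ^ 'n"
  by (simp add: gauss_pdf_def gauss_kernel_def)

lemma gauss_pdf_pos:
  fixes S :: "real ^ 'n ^ 'n"
  shows "pos_def_mat S \<Longrightarrow> gauss_pdf mu S x > 0"
  by (simp add: gauss_pdf_eq_kernel gauss_kernel_pos pos_def_mat_det_pos)

lemma borel_measurable_matrix_vector_mult [measurable]: "(*v) A \<in> borel_measurable borel"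
  for A :: "real ^ 'n ^ 'm"
  by (intro borel_measurable_continuous_onI matrix_vector_mult_linear_continuous_on)

lemma borel_measurable_gauss_kernel [measurable]: "gauss_kernel mu K \<in> borel_measurable borel"
  unfolding gauss_kernel_def[abs_def]
  by (intro borel_measurable_continuous_onI continuous_intros
      bounded_linear.continuous_on[OF matrix_vector_mul_bounded_linear])

lemma borel_measurable_gauss_pdf [measurable]: "gauss_pdf mu S \<in> borel_measurable borel"
  unfolding gauss_pdf_eq_kernel[abs_def] by measurable

lemma gauss_kernel_translate:
  fixes K :: "real ^ 'n ^ 'n"
  assumes "transpose K = K"
  shows "gauss_kernel mu K (x - v)
    = gauss_kernel mu K x * exp (v \<bullet> (K *v (x - mu)) - (1/2) * (v \<bullet> (K *v v)))"
proof -
  have "x - v - mu = (x - mu) - v"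
    by simp
  then show ?thesis
    unfolding gauss_kernel_def
    by (simp only: quadratic_form_diff[OF assms]) (simp add: exp_add[symmetric] right_diff_distrib distrib_left)
qed

lemma gauss_kernel_translate_congruence:
  fixes A :: "real ^ 'n ^ 'm" and S :: "real ^ 'n ^ 'n" and a :: "real ^ 'm"
  assumes S: "pos_def_mat S" and inj: "inj ((*v) (transpose A))"
  defines "B \<equiv> A ** S ** transpose A"
  defines "v \<equiv> S *v (transpose A *v (matrix_inv B *v a))"
  shows "A *v v = a"
    and "gauss_kernel mu (matrix_inv S) (x - v) * gauss_kernel (A *v mu) (matrix_inv B) (A *v x)
       = gauss_kernel mu (matrix_inv S) x * gauss_kernel (A *v mu) (matrix_inv B) (A *v x - a)"
proof -
  have invS: "invertible S"
    by (rule pos_def_mat_invertible[OF S])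
  have B: "pos_def_mat (matrix_inv B)"
    unfolding B_def by (rule pos_def_mat_matrix_inv[OF pos_def_mat_congruence[OF S inj]])
  have symS: "transpose (matrix_inv S) = matrix_inv S"
    by (rule pos_def_mat_symmetric[OF pos_def_mat_matrix_inv[OF S]])
  note symB = pos_def_mat_symmetric[OF B]
  have "A *v v = B *v (matrix_inv B *v a)"
    by (simp add: v_def B_def matrix_vector_mul_assoc matrix_mul_assoc del: transpose_matrix_vector)
  then show Av: "A *v v = a"
    using matrix_inv_cancel_right[OF pos_def_mat_invertible[OF pos_def_mat_congruence[OF S inj]]]
    by (simp add: B_def)
  have Siv: "matrix_inv S *v v = transpose A *v (matrix_inv B *v a)"
    by (simp add: v_def matrix_inv_cancel_left[OF invS] del: transpose_matrix_vector)
  have "v \<bullet> (matrix_inv S *v (x - mu)) = a \<bullet> (matrix_inv B *v (A *v x - A *v mu))"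
    by (metis Siv inner_symmetric_matrix[OF symS] inner_symmetric_matrix[OF symB]
        inner_transpose_matrix_vector matrix_vector_mult_diff_distrib)
  moreover have "v \<bullet> (matrix_inv S *v v) = a \<bullet> (matrix_inv B *v a)"
    by (metis Av Siv inner_commute inner_transpose_matrix_vector)
  ultimately have "gauss_kernel mu (matrix_inv S) (x - v)
      = gauss_kernel mu (matrix_inv S) x
        * exp (a \<bullet> (matrix_inv B *v (A *v x - A *v mu)) - (1/2) * (a \<bullet> (matrix_inv B *v a)))"
    by (simp only: gauss_kernel_translate[OF symS])
  then show "gauss_kernel mu (matrix_inv S) (x - v) * gauss_kernel (A *v mu) (matrix_inv B) (A *v x)
      = gauss_kernel mu (matrix_inv S) x * gauss_kernel (A *v mu) (matrix_inv B) (A *v x - a)"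
    by (simp only: gauss_kernel_translate[OF symB] mult_ac)
qed

lemma distr_gauss_pdf_linear_translate:
  fixes A :: "real ^ 'n ^ 'm" and S :: "real ^ 'n ^ 'n" and f :: "real ^ 'm \<Rightarrow> ennreal"
  assumes S: "pos_def_mat S" and inj: "inj ((*v) (transpose A))"
    and [measurable]: "f \<in> borel_measurable borel"
    and image: "distr (density lborel (\<lambda>x. ennreal (gauss_pdf mu S x))) lborel (\<lambda>x. A *v x)
      = density lborel f"
  defines "k \<equiv> gauss_kernel (A *v mu) (matrix_inv (A ** S ** transpose A))"
  shows "AE u in lborel. f (u - a) = f u * ennreal (k (u - a) / k u)"
proof (rule distr_density_translate_equivariant[OF _ _ _ _ image])
  define v where "v = S *v (transpose A *v (matrix_inv (A ** S ** transpose A) *v a))"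
  show "A *v (v + x) = a + A *v x" for x
    using gauss_kernel_translate_congruence(1)[OF S inj]
    by (simp add: v_def matrix_vector_right_distrib del: transpose_matrix_vector)
  show "ennreal (gauss_pdf mu S (x - v)) = ennreal (gauss_pdf mu S x) * ennreal (k (A *v x - a) / k (A *v x))"
    for x
  proof -
    have "gauss_kernel mu (matrix_inv S) (x - v)
        = gauss_kernel mu (matrix_inv S) x * (k (A *v x - a) / k (A *v x))"
      using gauss_kernel_translate_congruence(2)[OF S inj, of mu x a]
      by (simp add: v_def k_def field_simps)
    then have "gauss_pdf mu S (x - v) = gauss_pdf mu S x * (k (A *v x - a) / k (A *v x))"
      by (simp add: gauss_pdf_eq_kernel)
    then show ?thesis
      using gauss_pdf_pos[OF S] by (simp only: ennreal_mult'[symmetric] less_imp_le)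
  qed
qed (simp_all add: k_def)

lemma distributed_gauss_pdf_linear_image:
  fixes A :: "real ^ 'n ^ 'm" and S :: "real ^ 'n ^ 'n" and pu :: "real ^ 'm \<Rightarrow> real"
  assumes S: "pos_def_mat S" and inj: "inj ((*v) (transpose A))"
    and distributed: "distributed (density lborel (\<lambda>x. ennreal (gauss_pdf mu S x))) lborel
      (\<lambda>x. A *v x) (\<lambda>u. ennreal (pu u))"
  shows "\<exists>c>0. AE x in lborel.
    pu (A *v x) = c * gauss_kernel (A *v mu) (matrix_inv (A ** S ** transpose A)) (A *v x)"
proof -
  define k where "k = gauss_kernel (A *v mu) (matrix_inv (A ** S ** transpose A))"
  have image: "distr (density lborel (\<lambda>x. ennreal (gauss_pdf mu S x))) lborel (\<lambda>x. A *v x)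
      = density lborel (\<lambda>u. ennreal (pu u))"
    and pu_measurable: "(\<lambda>u. ennreal (pu u)) \<in> borel_measurable borel"
    using distributed unfolding distributed_def by auto
  have pullback: "AE x in lborel. P (A *v x)" if "AE u in density lborel (\<lambda>u. ennreal (pu u)). P u" for P
    by (rule AE_distr_density_pullback[OF _ _ _ image that]) (simp_all add: gauss_pdf_pos[OF S])
  have k_pos: "k u > 0" for u
    by (simp add: k_def gauss_kernel_pos)
  obtain c where "c \<ge> 0" and c: "AE u in lborel. ennreal (pu u) = ennreal (c * k u)"
    using AE_translate_equivariant_imp_proportional[OF pu_measurable _ k_pos _
        distr_gauss_pdf_linear_translate[OF S inj pu_measurable image, folded k_def]]
    by (auto simp: k_def)
  have "c \<noteq> 0"
  proof
    assume "c = 0"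
    with c have "AE u in density lborel (\<lambda>u. ennreal (pu u)). False"
      by (subst AE_density[OF pu_measurable[folded measurable_lborel2]]) (auto elim: eventually_mono)
    then have "AE x :: real ^ 'n in lborel. False"
      by (rule pullback)
    then show False
      using AE_lborel_imp_ex by blast
  qed
  with \<open>c \<ge> 0\<close> have "c > 0"
    by simp
  have "AE u in lborel. pu u = c * k u"
    using c by eventually_elim
      (metis \<open>c > 0\<close> k_pos mult_pos_pos ennreal_eq_0_iff ennreal_inj linorder_not_le order_less_imp_le)
  then have "AE u in density lborel (\<lambda>u. ennreal (pu u)). pu u = c * k u"
    by (subst AE_density[OF pu_measurable[folded measurable_lborel2]]) (auto elim: eventually_mono)
  then have "AE x in lborel. pu (A *v x) = c * k (A *v x)"
    by (rule pullback)
  with \<open>c > 0\<close> show ?thesis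
    unfolding k_def by blast
qed

lemma gauss_kernel_lg_product:
  fixes A :: "real ^ 'n ^ 'm" and S :: "real ^ 'n ^ 'n" and E :: "real ^ 'm ^ 'm"
    and mu :: "real ^ 'n" and mue :: "real ^ 'm"
  assumes S: "pos_def_mat S" and E: "pos_def_mat E" and inj: "inj ((*v) (transpose A))"
  defines "P \<equiv> lg_precision S E A"
    and "b \<equiv> transpose A *v (matrix_inv E *v (mue - A *v mu))"
  shows "gauss_kernel mu (matrix_inv S) x * gauss_kernel mue (matrix_inv E) (A *v x)
    = exp (- (1/2) * ((mue - A *v mu) \<bullet> (matrix_inv E *v (mue - A *v mu)) - b \<bullet> (matrix_inv P *v b)))
      * gauss_kernel (mu + matrix_inv P *v b) P x
      * gauss_kernel (A *v mu) (matrix_inv (A ** S ** transpose A)) (A *v x)"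
  using lg_precision_complete_square[OF S E inj, of x mu mue, folded P_def b_def]
  unfolding gauss_kernel_def mult_exp_exp by (intro arg_cong[where f=exp]) argo

lemma gauss_pdf_lg_product:
  fixes A :: "real ^ 'n ^ 'm" and S :: "real ^ 'n ^ 'n" and E :: "real ^ 'm ^ 'm"
    and mu :: "real ^ 'n" and mue :: "real ^ 'm"
  assumes S: "pos_def_mat S" and E: "pos_def_mat E" and inj: "inj ((*v) (transpose A))"
  defines "P \<equiv> lg_precision S E A"
    and "b \<equiv> transpose A *v (matrix_inv E *v (mue - A *v mu))"
  shows "\<exists>c>0. \<forall>x. gauss_pdf mu S x * gauss_pdf mue E (A *v x)
    = c * gauss_pdf (mu + matrix_inv P *v b) (matrix_inv P) x
        * gauss_kernel (A *v mu) (matrix_inv (A ** S ** transpose A)) (A *v x)"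
proof (intro exI conjI allI)
  have P: "pos_def_mat P"
    unfolding P_def by (rule pos_def_mat_lg_precision[OF S E inj])
  have "invertible P"
    by (rule pos_def_mat_invertible[OF P])
  define c where "c = exp (- (1/2) * ((mue - A *v mu) \<bullet> (matrix_inv E *v (mue - A *v mu))
      - b \<bullet> (matrix_inv P *v b))) * sqrt ((2 * pi) ^ CARD('n) * det (matrix_inv P))
      / (sqrt ((2 * pi) ^ CARD('n) * det S) * sqrt ((2 * pi) ^ CARD('m) * det E))"
  have dets: "det S > 0" "det E > 0" "det (matrix_inv P) > 0"
    using pos_def_mat_det_pos pos_def_mat_matrix_inv S E P by blast+
  then show "c > 0"
    by (simp add: c_def)
  show "gauss_pdf mu S x * gauss_pdf mue E (A *v x)
    = c * gauss_pdf (mu + matrix_inv P *v b) (matrix_inv P) x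
        * gauss_kernel (A *v mu) (matrix_inv (A ** S ** transpose A)) (A *v x)" for x
    using gauss_kernel_lg_product[OF S E inj, where mu=mu and mue=mue and x=x, folded P_def b_def] dets
    by (simp add: gauss_pdf_eq_kernel c_def matrix_inv_matrix_inv[OF \<open>invertible P\<close>])
qed

theorem mainTheorem2:
  fixes A :: "real ^ 'n ^ 'm"
    and mu_t :: "real ^ 'n" and S_t :: "real ^ 'n ^ 'n"
    and mu_e :: "real ^ 'm" and S_e :: "real ^ 'm ^ 'm"
    and pu :: "real ^ 'm \<Rightarrow> real"
  assumes "pos_def_mat S_t"
    and "pos_def_mat S_e"
    and "rank A = CARD('m)"
    and "distributed (density lborel (\<lambda>x. ennreal (gauss_pdf mu_t S_t x))) lborel
           (\<lambda>x. A *v x) (\<lambda>u. ennreal (pu u))"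
  shows "\<exists>c > 0. AE x in lborel.
           gauss_pdf mu_t S_t x * gauss_pdf mu_e S_e (A *v x) / pu (A *v x)
           = c * gauss_pdf
                   (mu_t + matrix_inv (matrix_inv S_t + transpose A **
                      (matrix_inv S_e - matrix_inv (A ** S_t ** transpose A)) ** A)
                    *v (transpose A *v (matrix_inv S_e *v (mu_e - A *v mu_t))))
                   (matrix_inv (matrix_inv S_t + transpose A **
                      (matrix_inv S_e - matrix_inv (A ** S_t ** transpose A)) ** A))
                   x"
proof -
  let ?k = "gauss_kernel (A *v mu_t) (matrix_inv (A ** S_t ** transpose A))"
  let ?m = "mu_t + matrix_inv (lg_precision S_t S_e A) *v (transpose A *v (matrix_inv S_e *v (mu_e - A *v mu_t)))"
  have inj: "inj ((*v) (transpose A))"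
    using assms(3) full_rank_injective[of "transpose A"] by (simp add: rank_transpose)
  obtain C where "C > 0" and marginal: "AE x in lborel. pu (A *v x) = C * ?k (A *v x)"
    using distributed_gauss_pdf_linear_image[OF assms(1) inj assms(4)] by blast
  obtain c where "c > 0" and product: "\<And>x. gauss_pdf mu_t S_t x * gauss_pdf mu_e S_e (A *v x)
      = c * gauss_pdf ?m (matrix_inv (lg_precision S_t S_e A)) x * ?k (A *v x)"
    using gauss_pdf_lg_product[OF assms(1,2) inj] by blast
  have "AE x in lborel. gauss_pdf mu_t S_t x * gauss_pdf mu_e S_e (A *v x) / pu (A *v x)
      = c / C * gauss_pdf ?m (matrix_inv (lg_precision S_t S_e A)) x"
    using marginal
  proof eventually_elim
    case (elim x)
    then show ?case
      using \<open>C > 0\<close> by (simp add: product)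
  qed
  moreover have "c / C > 0"
    using \<open>c > 0\<close> \<open>C > 0\<close> by simp
  ultimately show ?thesis
    unfolding lg_precision_def by blast
qed

end
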